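(* Let $A=\{a_n\}_{n\in\mathbb Z}\subset\mathbb R$ be an almost periodic set of density $d$ such that $a_n\le a_{n+1}$ for all $n\in\mathbb Z$. Then $$a_n=n/d+\phi(n),\qquad n\in\mathbb Z,$$ with an almost periodic mapping $\phi:\mathbb Z\to\mathbb R$.
   Context: A discrete locally finite multiset $A=\{a_n\}_{n\in\mathbb Z}\subset\mathbb R$ (a point may occur several times in the sequence) is called almost periodic if for every $\varepsilon>0$ the set $$E_\varepsilon=\{\tau\in\mathbb R:\ \exists\text{ a bijection }\sigma:\mathbb Z\to\mathbb Z\text{ with }\sup_n|a_n+\tau-a_{\sigma(n)}|<\varepsilon\}$$ is relatively dense, i.e. there is $L_\varepsilon>0$ with $E_\varepsilon\cap(x,x+L_\varepsilon)\ne\emptyset$ for every $x\in\mathbb R$. For such $A$ there exists the density $d=\lim_{l(I)\to\infty}\#(A\cap I)/l(I)>0$, the limit taken over half-intervals $I$ with length $l(I)\to\infty$, where $\#(A\cap I)$ counts points with multiplicity. A mapping $\phi:\mathbb Z\to\mathbb R$ is almost periodic if for every $\varepsilon>0$ the set of integers $h$ with $\sup_{n\in\mathbb Z}|\phi(n+h)-\phi(n)|<\varepsilon$ is relatively dense in $\mathbb Z$ (meets every interval of some fixed length $L_\varepsilon$). *)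

theory Defs
  imports Complex_Main
begin

text \<open>A multiset of reals is given as a sequence a :: int => real (points may repeat).\<close>

definition locally_finite_seq :: "(int \<Rightarrow> real) \<Rightarrow> bool" where
  "locally_finite_seq a \<longleftrightarrow> (\<forall>x y. finite {n. a n \<in> {x..y}})"

definition rel_dense :: "real set \<Rightarrow> bool" where
  "rel_dense E \<longleftrightarrow> (\<exists>L>0. \<forall>x. \<exists>\<tau>\<in>E. x < \<tau> \<and> \<tau> < x + L)"

text \<open>E_eps: almost periods; "sup_n |...| < eps" is written as "some delta < eps bounds all terms".\<close>
definition almost_periods :: "(int \<Rightarrow> real) \<Rightarrow> real \<Rightarrow> real set" where
  "almost_periods a \<epsilon> = {\<tau>. \<exists>\<sigma> :: int \<Rightarrow> int. bij \<sigma> \<and>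
      (\<exists>\<delta><\<epsilon>. \<forall>n. \<bar>a n + \<tau> - a (\<sigma> n)\<bar> \<le> \<delta>)}"

definition ap_set :: "(int \<Rightarrow> real) \<Rightarrow> bool" where
  "ap_set a \<longleftrightarrow> locally_finite_seq a \<and> (\<forall>\<epsilon>>0. rel_dense (almost_periods a \<epsilon>))"

definition has_density :: "(int \<Rightarrow> real) \<Rightarrow> real \<Rightarrow> bool" where
  "has_density a d \<longleftrightarrow> (\<forall>\<epsilon>>0. \<exists>L. \<forall>x l. l \<ge> L \<longrightarrow> l > 0 \<longrightarrow>
      \<bar>real (card {n. a n \<in> {x..<x+l}}) / l - d\<bar> < \<epsilon>)"

definition ap_map :: "(int \<Rightarrow> real) \<Rightarrow> bool" where
  "ap_map \<phi> \<longleftrightarrow> (\<forall>\<epsilon>>0. \<exists>L::int. L > 0 \<and> (\<forall>m::int. \<exists>h. m \<le> h \<and> h < m + L \<and>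
      (\<exists>\<delta><\<epsilon>. \<forall>n. \<bar>\<phi> (n + h) - \<phi> n\<bar> \<le> \<delta>)))"

end

theory Submission
  imports Defs
begin

text \<open>
  For a sorted sequence, the number of points in [u, v) is rank v - rank u, where rank x is the
  index of the first point \<open>\<ge> x\<close>. An \<open>\<epsilon>\<close>-almost period \<open>\<tau>\<close> of the set, matched by
  a bijection with error \<open>\<delta> < \<epsilon>\<close>, can only move the counting function by a constant integer h:
  rank (z + \<tau> - \<delta>) \<le> rank z + h \<le> rank (z + \<tau> + \<delta>). Hence the index shift by h moves every
  point by \<open>\<tau> \<plusminus> \<delta>\<close>, and iterating the shift and comparing with the density gives
  \<open>\<bar>h / d - \<tau>\<bar> \<le> \<delta>\<close>. So h is a \<open>2\<delta>\<close>-almost period of \<open>\<phi> n = a n - n / d\<close>, and these h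
  are relatively dense because the \<open>\<tau>\<close> are.
\<close>

lemma int_between_bounds:
  fixes f g :: "'a \<Rightarrow> int"
  assumes "\<And>z w. f z \<le> g w"
  shows "\<exists>h. \<forall>z. f z \<le> h \<and> h \<le> g z"
proof -
  have "bdd_above (range f)"
    using assms by (intro bdd_aboveI2)
  then show ?thesis
    using assms by (intro exI[of _ "Sup (range f)"] allI conjI cSup_upper cSup_least) auto
qed

definition int_almost_periods :: "(int \<Rightarrow> real) \<Rightarrow> real \<Rightarrow> int set" where
  "int_almost_periods \<phi> \<epsilon> = {h. \<exists>\<delta><\<epsilon>. \<forall>n. \<bar>\<phi> (n + h) - \<phi> n\<bar> \<le> \<delta>}"

lemma ap_map_iff_int_almost_periods:
  "ap_map \<phi> \<longleftrightarrow> (\<forall>\<epsilon>>0. \<exists>L>0. \<forall>m. \<exists>h\<in>int_almost_periods \<phi> \<epsilon>. m \<le> h \<and> h < m + L)"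
  unfolding ap_map_def int_almost_periods_def by blast

lemma uminus_in_int_almost_periods:
  assumes "h \<in> int_almost_periods \<phi> \<epsilon>"
  shows "- h \<in> int_almost_periods \<phi> \<epsilon>"
proof -
  obtain \<delta> where "\<delta> < \<epsilon>" and \<delta>: "\<And>n. \<bar>\<phi> (n + h) - \<phi> n\<bar> \<le> \<delta>"
    using assms unfolding int_almost_periods_def by blast
  have "\<bar>\<phi> (n + - h) - \<phi> n\<bar> \<le> \<delta>" for n
    using \<delta>[of "n - h"] by (simp add: abs_minus_commute)
  then show ?thesis
    using \<open>\<delta> < \<epsilon>\<close> unfolding int_almost_periods_def by blast
qed

lemma int_rel_dense_if_symmetric:
  fixes H :: "int set"
  assumes symmetric: "\<And>h. h \<in> H \<Longrightarrow> - h \<in> H"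
    and above: "\<And>m. 0 \<le> m \<Longrightarrow> \<exists>h\<in>H. m < h \<and> h < m + K"
  shows "\<exists>L>0. \<forall>m. \<exists>h\<in>H. m \<le> h \<and> h < m + L"
proof (intro exI[of _ "2 * K"] conjI allI)
  obtain h0 where h0: "h0 \<in> H" "0 < h0" "h0 < K"
    using above[of 0] by auto
  then show "0 < 2 * K" by simp
  fix m :: int
  consider "0 \<le> m" | "- K < m" "m < 0" | "m \<le> - K" by linarith
  then show "\<exists>h\<in>H. m \<le> h \<and> h < m + 2 * K"
  proof cases
    case 1
    then obtain h where "h \<in> H" "m < h" "h < m + K"
      using above by blast
    then show ?thesis using h0 by (intro bexI[of _ h]) auto
  next
    case 2
    then show ?thesis using h0 by (intro bexI[of _ h0]) auto
  next
    case 3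
    then obtain h where "h \<in> H" "- m - K < h" "h < - m"
      using above[of "- m - K"] by auto
    then show ?thesis using symmetric by (intro bexI[of _ "- h"]) auto
  qed
qed

locale sorted_locally_finite =
  fixes a :: "int \<Rightarrow> real"
  assumes sorted_step: "\<And>n. a n \<le> a (n + 1)"
    and locally_finite: "locally_finite_seq a"
begin

lemma points_mono: "m \<le> n \<Longrightarrow> a m \<le> a n"
  by (induction n rule: int_ge_induct) (auto intro: order_trans sorted_step)

lemma exists_point_above: "\<exists>n. x \<le> a n"
proof (rule ccontr)
  assume "\<not> ?thesis"
  then have "{0..} \<subseteq> {n. a n \<in> {a 0..x}}"
    using points_mono by (auto simp: not_le less_imp_le)
  moreover have "finite {n. a n \<in> {a 0..x}}"
    using locally_finite unfolding locally_finite_seq_def by blast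
  ultimately show False
    using infinite_Ici finite_subset by blast
qed

lemma exists_point_below: "\<exists>n. a n < x"
proof (rule ccontr)
  assume "\<not> ?thesis"
  then have "{..0} \<subseteq> {n. a n \<in> {x..a 0}}"
    using points_mono by (auto simp: not_less)
  moreover have "finite {n. a n \<in> {x..a 0}}"
    using locally_finite unfolding locally_finite_seq_def by blast
  ultimately show False
    using infinite_Iic finite_subset by blast
qed

lemma exists_first_point_above: "\<exists>m. a (m - 1) < x \<and> x \<le> a m"
proof -
  obtain n0 where n0: "a n0 < x" using exists_point_below by blast
  obtain n1 where n1: "x \<le> a n1" using exists_point_above by blast
  have "n0 \<le> n1"
    using points_mono[of n1 n0] n0 n1 by linarith
  then show ?thesis
    using n1
  proof (induction n1 rule: int_ge_induct)
    case base
    then show ?case using n0 by simp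
  next
    case (step i)
    then show ?case
      by (cases "x \<le> a i") (auto intro: exI[of _ "i + 1"])
  qed
qed

definition rank :: "real \<Rightarrow> int" where
  "rank x = (SOME m. a (m - 1) < x \<and> x \<le> a m)"

lemma rank_le_iff: "rank x \<le> n \<longleftrightarrow> x \<le> a n"
proof -
  have first: "a (rank x - 1) < x" "x \<le> a (rank x)"
    using someI_ex[OF exists_first_point_above] unfolding rank_def by auto
  show ?thesis
  proof
    assume "rank x \<le> n"
    then show "x \<le> a n" using first(2) points_mono order_trans by blast
  next
    assume "x \<le> a n"
    then show "rank x \<le> n" using first(1) points_mono[of n "rank x - 1"] by linarith
  qed
qed

lemma rank_mono: "x \<le> y \<Longrightarrow> rank x \<le> rank y"
  using rank_le_iff order_trans by blast

lemma points_in_interval: "{n. a n \<in> {u..<v}} = {rank u..<rank v}"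
  using rank_le_iff[of u] rank_le_iff[of v] by (force simp: not_le[symmetric])

lemma card_points_in_interval: "card {n. a n \<in> {u..<v}} = nat (rank v - rank u)"
  unfolding points_in_interval by simp

lemma rank_diff_le_of_matching:
  assumes "inj \<sigma>" and match: "\<And>n. \<bar>a n + \<tau> - a (\<sigma> n)\<bar> \<le> \<delta>" and "u \<le> v"
  shows "rank v - rank u \<le> rank (v + \<tau> + \<delta>) - rank (u + \<tau> - \<delta>)"
proof -
  have "u + \<tau> - \<delta> \<le> v + \<tau> + \<delta>"
    using match[of 0] \<open>u \<le> v\<close> by linarith
  then have shifted_ranks: "rank (u + \<tau> - \<delta>) \<le> rank (v + \<tau> + \<delta>)"
    by (rule rank_mono)
  have "\<sigma> ` {n. a n \<in> {u..<v}} \<subseteq> {n. a n \<in> {u + \<tau> - \<delta>..<v + \<tau> + \<delta>}}"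
  proof (intro image_subsetI)
    fix n
    assume "n \<in> {n. a n \<in> {u..<v}}"
    then show "\<sigma> n \<in> {n. a n \<in> {u + \<tau> - \<delta>..<v + \<tau> + \<delta>}}"
      using match[of n] by (auto simp: abs_le_iff)
  qed
  moreover have "finite {n. a n \<in> {u + \<tau> - \<delta>..<v + \<tau> + \<delta>}}"
    unfolding points_in_interval by simp
  ultimately have "card {n. a n \<in> {u..<v}} \<le> card {n. a n \<in> {u + \<tau> - \<delta>..<v + \<tau> + \<delta>}}"
    using inj_on_subset[OF \<open>inj \<sigma>\<close> subset_UNIV] by (intro card_inj_on_le)
  then show ?thesis
    unfolding card_points_in_interval using shifted_ranks by simp
qed

lemma rank_shift_of_matching:
  assumes "bij \<sigma>" and match: "\<And>n. \<bar>a n + \<tau> - a (\<sigma> n)\<bar> \<le> \<delta>"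
  shows "\<exists>h. \<forall>z. rank (z + \<tau> - \<delta>) \<le> rank z + h \<and> rank z + h \<le> rank (z + \<tau> + \<delta>)"
proof -
  have inv_match: "\<bar>a n + - \<tau> - a (inv \<sigma> n)\<bar> \<le> \<delta>" for n
    using match[of "inv \<sigma> n"] \<open>bij \<sigma>\<close> by (simp add: bij_is_surj surj_f_inv_f abs_minus_commute)
  have "rank (z + \<tau> - \<delta>) - rank z \<le> rank (w + \<tau> + \<delta>) - rank w" for z w
  proof (cases "z \<le> w")
    case True
    then show ?thesis
      using rank_diff_le_of_matching[OF bij_is_inj[OF \<open>bij \<sigma>\<close>] match] by fastforce
  next
    case False
    show ?thesis
    proof (cases "w + \<tau> + \<delta> \<le> z + \<tau> - \<delta>")
      case True
      have "bij (inv \<sigma>)"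
        using \<open>bij \<sigma>\<close> by (rule bij_imp_bij_inv)
      from rank_diff_le_of_matching[OF bij_is_inj[OF this] inv_match True]
      show ?thesis by simp
    next
      case False
      then show ?thesis
        using rank_mono[of "z + \<tau> - \<delta>" "w + \<tau> + \<delta>"] rank_mono[of w z] \<open>\<not> z \<le> w\<close> by linarith
    qed
  qed
  then show ?thesis
    using int_between_bounds[of "\<lambda>z. rank (z + \<tau> - \<delta>) - rank z" "\<lambda>w. rank (w + \<tau> + \<delta>) - rank w"]
    by (metis add.commute le_diff_eq diff_le_eq)
qed

lemma shift_of_rank_shift:
  assumes lower: "\<And>z. rank (z + \<tau> - \<delta>) \<le> rank z + h"
    and upper: "\<And>z. rank z + h \<le> rank (z + \<tau> + \<delta>)"
  shows "\<bar>a (n + h) - a n - \<tau>\<bar> \<le> \<delta>"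
proof -
  have "rank (a n + \<tau> - \<delta>) \<le> n + h"
    using lower[of "a n"] rank_le_iff[of "a n" n] by linarith
  then have "a n + \<tau> - \<delta> \<le> a (n + h)"
    by (simp add: rank_le_iff)
  moreover have "rank (a (n + h) - \<tau> - \<delta>) \<le> n"
    using upper[of "a (n + h) - \<tau> - \<delta>"] rank_le_iff[of "a (n + h)" "n + h"] by simp
  then have "a (n + h) - \<tau> - \<delta> \<le> a n"
    by (simp add: rank_le_iff)
  ultimately show ?thesis
    by (simp add: abs_le_iff)
qed

lemma rank_growth_tendsto_density:
  assumes "has_density a d" and "t > 0"
  shows "(\<lambda>k. real_of_int (rank (real k * t) - rank 0) / (real k * t)) \<longlonglongrightarrow> d"
proof -
  have "((\<lambda>l. real_of_int (rank l - rank 0) / l) \<longlongrightarrow> d) at_top"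
  proof (rule tendstoI)
    fix \<epsilon> :: real
    assume "\<epsilon> > 0"
    then obtain L where L: "\<And>x l. l \<ge> L \<Longrightarrow> l > 0 \<Longrightarrow>
        \<bar>real (card {n. a n \<in> {x..<x + l}}) / l - d\<bar> < \<epsilon>"
      using assms(1) unfolding has_density_def by blast
    have "\<bar>real_of_int (rank l - rank 0) / l - d\<bar> < \<epsilon>" if "max L 1 \<le> l" for l
    proof -
      have "real (card {n. a n \<in> {0..<0 + l}}) = real_of_int (rank l - rank 0)"
        using card_points_in_interval[of 0 l] rank_mono[of 0 l] that by simp
      then show ?thesis
        using L[of l 0] that by simp
    qed
    then show "\<forall>\<^sub>F l in at_top. dist (real_of_int (rank l - rank 0) / l) d < \<epsilon>"
      unfolding eventually_at_top_linorder dist_real_def by blast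
  qed
  moreover have "filterlim (\<lambda>k. real k * t) at_top sequentially"
    using filterlim_at_top_mult_tendsto_pos[OF tendsto_const \<open>t > 0\<close> filterlim_real_sequentially] .
  ultimately show ?thesis
    by (rule filterlim_compose)
qed

lemma density_le_of_rank_shift:
  assumes "has_density a d" and "t > 0" and shift: "\<And>z. rank (z + t) \<le> rank z + h"
  shows "d * t \<le> h"
proof -
  have iterate: "rank (real k * t) - rank 0 \<le> int k * h" for k :: nat
  proof (induction k)
    case (Suc k)
    then show ?case
      using shift[of "real k * t"] by (simp add: algebra_simps)
  qed simp
  have "real_of_int (rank (real k * t) - rank 0) / (real k * t) \<le> h / t" if "k \<ge> 1" for k :: nat
  proof -
    have "real_of_int (rank (real k * t) - rank 0) \<le> real k * h"
      using iterate[of k] by (metis of_int_le_iff of_int_mult of_int_of_nat_eq)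
    then have "real_of_int (rank (real k * t) - rank 0) / (real k * t) \<le> real k * h / (real k * t)"
      using \<open>t > 0\<close> by (intro divide_right_mono) simp_all
    then show ?thesis
      using that by simp
  qed
  then have "d \<le> h / t"
    by (intro LIMSEQ_le_const2[OF rank_growth_tendsto_density[OF assms(1,2)]]) blast
  then show ?thesis
    using \<open>t > 0\<close> by (simp add: pos_le_divide_eq)
qed

lemma rank_shift_le_density:
  assumes "has_density a d" and "t > 0" and shift: "\<And>z. rank z + h \<le> rank (z + t)"
  shows "h \<le> d * t"
proof -
  have iterate: "int k * h \<le> rank (real k * t) - rank 0" for k :: nat
  proof (induction k)
    case (Suc k)
    then show ?case
      using shift[of "real k * t"] by (simp add: algebra_simps)
  qed simp
  have "h / t \<le> real_of_int (rank (real k * t) - rank 0) / (real k * t)" if "k \<ge> 1" for k :: nat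
  proof -
    have "real k * h \<le> real_of_int (rank (real k * t) - rank 0)"
      using iterate[of k] by (metis of_int_le_iff of_int_mult of_int_of_nat_eq)
    then have "real k * h / (real k * t) \<le> real_of_int (rank (real k * t) - rank 0) / (real k * t)"
      using \<open>t > 0\<close> by (intro divide_right_mono) simp_all
    then show ?thesis
      using that by simp
  qed
  then have "h / t \<le> d"
    by (intro LIMSEQ_le_const[OF rank_growth_tendsto_density[OF assms(1,2)]]) blast
  then show ?thesis
    using \<open>t > 0\<close> by (simp add: pos_divide_le_eq)
qed

lemma almost_period_shift:
  assumes dens: "has_density a d" and "\<tau> \<in> almost_periods a \<epsilon>" and "\<epsilon> \<le> \<tau>"
  shows "\<exists>h \<delta>. 0 \<le> \<delta> \<and> \<delta> < \<epsilon> \<and> (\<forall>n. \<bar>a (n + h) - a n - \<tau>\<bar> \<le> \<delta>)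
    \<and> d * (\<tau> - \<delta>) \<le> h \<and> h \<le> d * (\<tau> + \<delta>)"
proof -
  obtain \<sigma> \<delta> where "bij \<sigma>" "\<delta> < \<epsilon>" and match: "\<And>n. \<bar>a n + \<tau> - a (\<sigma> n)\<bar> \<le> \<delta>"
    using assms(2) unfolding almost_periods_def by blast
  have "0 \<le> \<delta>"
    using match[of 0] by linarith
  obtain h where lower: "\<And>z. rank (z + \<tau> - \<delta>) \<le> rank z + h"
    and upper: "\<And>z. rank z + h \<le> rank (z + \<tau> + \<delta>)"
    using rank_shift_of_matching[OF \<open>bij \<sigma>\<close> match] by blast
  have "d * (\<tau> - \<delta>) \<le> h"
    using lower \<open>\<delta> < \<epsilon>\<close> \<open>\<epsilon> \<le> \<tau>\<close>
    by (intro density_le_of_rank_shift[OF dens]) (simp_all add: add_diff_eq)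
  moreover have "h \<le> d * (\<tau> + \<delta>)"
    using upper \<open>0 \<le> \<delta>\<close> \<open>\<delta> < \<epsilon>\<close> \<open>\<epsilon> \<le> \<tau>\<close>
    by (intro rank_shift_le_density[OF dens]) (simp_all add: add.assoc)
  ultimately show ?thesis
    using shift_of_rank_shift[OF lower upper] \<open>0 \<le> \<delta>\<close> \<open>\<delta> < \<epsilon>\<close> by blast
qed

lemma density_pos:
  assumes almost_periodic: "\<And>\<epsilon>. \<epsilon> > 0 \<Longrightarrow> rel_dense (almost_periods a \<epsilon>)" and dens: "has_density a d"
  shows "0 < d"
proof -
  obtain \<tau> where \<tau>: "\<tau> \<in> almost_periods a 1" "1 < \<tau>"
    using almost_periodic[of 1] unfolding rel_dense_def by force
  then obtain h \<delta> where "0 \<le> \<delta>" "\<delta> < 1" and shift: "\<bar>a (0 + h) - a 0 - \<tau>\<bar> \<le> \<delta>"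
    and "h \<le> d * (\<tau> + \<delta>)"
    using almost_period_shift[OF dens \<tau>(1) less_imp_le[OF \<tau>(2)]] by blast
  have "a 0 < a h"
    using shift \<open>\<delta> < 1\<close> \<open>1 < \<tau>\<close> by (simp add: abs_le_iff)
  then have "0 < h"
    using points_mono[of h 0] by (meson not_less not_le)
  then have "0 < d * (\<tau> + \<delta>)"
    using \<open>h \<le> d * (\<tau> + \<delta>)\<close> by linarith
  then show ?thesis
    using \<open>0 \<le> \<delta>\<close> \<open>1 < \<tau>\<close> by (simp add: zero_less_mult_iff)
qed

lemma deviation_almost_periods_above:
  assumes almost_periodic: "\<And>\<epsilon>. \<epsilon> > 0 \<Longrightarrow> rel_dense (almost_periods a \<epsilon>)" and dens: "has_density a d"
    and "\<epsilon> > 0"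
  obtains K where "\<And>m. 0 \<le> m \<Longrightarrow>
    \<exists>h\<in>int_almost_periods (\<lambda>n. a n - n / d) \<epsilon>. m < h \<and> h < m + K"
proof -
  have "d > 0"
    using density_pos[OF almost_periodic dens] .
  define e where "e = \<epsilon> / 2"
  obtain L where L: "\<And>x. \<exists>\<tau>\<in>almost_periods a e. x < \<tau> \<and> \<tau> < x + L"
    using almost_periodic[of e] \<open>\<epsilon> > 0\<close> unfolding rel_dense_def e_def by auto
  have "\<exists>h\<in>int_almost_periods (\<lambda>n. a n - n / d) \<epsilon>. m < h \<and> h < m + \<lceil>d * (L + 2 * e)\<rceil>"
    if "0 \<le> m" for m :: int
  proof -
    obtain \<tau> where "\<tau> \<in> almost_periods a e" and \<tau>: "m / d + e < \<tau>" "\<tau> < m / d + e + L"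
      using L by blast
    moreover have "e \<le> \<tau>"
      using \<tau>(1) \<open>0 \<le> m\<close> \<open>d > 0\<close> divide_nonneg_pos[of "real_of_int m" d] by linarith
    ultimately obtain h \<delta> where "\<delta> < e" and shift: "\<And>n. \<bar>a (n + h) - a n - \<tau>\<bar> \<le> \<delta>"
      and h: "d * (\<tau> - \<delta>) \<le> h" "h \<le> d * (\<tau> + \<delta>)"
      using almost_period_shift[OF dens] by blast
    have h_div: "\<tau> - \<delta> \<le> h / d" "h / d \<le> \<tau> + \<delta>"
      using h \<open>d > 0\<close> by (simp_all add: pos_le_divide_eq pos_divide_le_eq mult.commute)
    have "\<bar>(a (n + h) - (n + h) / d) - (a n - n / d)\<bar> \<le> 2 * \<delta>" for n
    proof -
      have "real_of_int (n + h) / d = n / d + h / d"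
        by (simp add: add_divide_distrib)
      then show ?thesis
        using shift[of n] h_div by (simp add: abs_le_iff)
    qed
    then have "h \<in> int_almost_periods (\<lambda>n. a n - n / d) \<epsilon>"
      unfolding int_almost_periods_def using \<open>\<delta> < e\<close> e_def by (intro CollectI exI[of _ "2 * \<delta>"]) auto
    moreover have "m < h"
    proof -
      have "d * (m / d) < d * (\<tau> - \<delta>)"
        using \<tau>(1) \<open>\<delta> < e\<close> \<open>d > 0\<close> by (intro mult_strict_left_mono) simp_all
      then show ?thesis
        using h(1) \<open>d > 0\<close> by simp
    qed
    moreover have "h < m + \<lceil>d * (L + 2 * e)\<rceil>"
    proof -
      have "d * (\<tau> + \<delta>) < d * (m / d + e + L + e)"
        using \<tau>(2) \<open>\<delta> < e\<close> \<open>d > 0\<close> by simp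
      also have "\<dots> = m + d * (L + 2 * e)"
        using \<open>d > 0\<close> by (simp add: field_simps)
      finally show ?thesis
        using h(2) by linarith
    qed
    ultimately show ?thesis by blast
  qed
  then show thesis by (rule that)
qed

lemma ap_map_deviation:
  assumes almost_periodic: "\<And>\<epsilon>. \<epsilon> > 0 \<Longrightarrow> rel_dense (almost_periods a \<epsilon>)" and dens: "has_density a d"
  shows "ap_map (\<lambda>n. a n - n / d)"
  unfolding ap_map_iff_int_almost_periods
proof (intro allI impI)
  fix \<epsilon> :: real
  assume "\<epsilon> > 0"
  then obtain K where "\<And>m. 0 \<le> m \<Longrightarrow>
      \<exists>h\<in>int_almost_periods (\<lambda>n. a n - n / d) \<epsilon>. m < h \<and> h < m + K"
    using deviation_almost_periods_above[OF almost_periodic dens] by blast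
  then show "\<exists>L>0. \<forall>m. \<exists>h\<in>int_almost_periods (\<lambda>n. a n - n / d) \<epsilon>. m \<le> h \<and> h < m + L"
    using int_rel_dense_if_symmetric[OF uminus_in_int_almost_periods] by blast
qed

end

theorem theorem1:
  fixes a :: "int \<Rightarrow> real" and d :: real
  assumes "ap_set a"
    and "has_density a d"
    and "\<And>n. a n \<le> a (n + 1)"
  shows "\<exists>\<phi>. ap_map \<phi> \<and> (\<forall>n. a n = real_of_int n / d + \<phi> n)"
proof -
  interpret sorted_locally_finite a
    using assms(1,3) unfolding ap_set_def by unfold_locales auto
  have "ap_map (\<lambda>n. a n - n / d)"
    using assms(1,2) unfolding ap_set_def by (intro ap_map_deviation) auto
  then show ?thesis
    by (intro exI[of _ "\<lambda>n. a n - n / d"]) simp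
qed

end
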